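(* Let $X$ be a set and let $\mathscr{A}$ be a non-empty family of subsets of $X$ which is closed under finite intersections. Then $$\mathscr{L}_1(\mathscr{A}) := \{d \in \mathscr{P}(X) : d \text{ is bounded on } A \times A \text{ for some } A \in \mathscr{A}\}$$ is a Lipschitz structure for $X$.
   Context: $\mathscr{P}(X)$ denotes the family of all pseudo-metrics on $X$ (symmetric maps $d: X\times X \to [0,\infty)$ satisfying the triangle inequality and vanishing on the whole diagonal). A Lipschitz structure for $X$ is a non-empty family $\mathscr{L}$ of pseudo-metrics on $X$ such that: (L1) if $d$ is a pseudo-metric on $X$ with $d \le d_1$ for some $d_1 \in \mathscr{L}$, then $d \in \mathscr{L}$; (L2) if $d \in \mathscr{L}$ then $\alpha d \in \mathscr{L}$ for every real $\alpha>0$; (L3) if $d_1,d_2 \in \mathscr{L}$ then $d_1 \vee d_2$ (pointwise maximum) belongs to $\mathscr{L}$. *)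

theory Defs
  imports Complex_Main
begin

text \<open>Pseudo-metrics on a set X, represented as real-valued functions on X \<times> X,
  extended by 0 outside X \<times> X (so that they are determined by their values on X \<times> X).\<close>

definition pseudo_metric_on :: "'a set \<Rightarrow> ('a \<Rightarrow> 'a \<Rightarrow> real) \<Rightarrow> bool" where
  "pseudo_metric_on X d \<longleftrightarrow>
     (\<forall>x y. (x \<notin> X \<or> y \<notin> X) \<longrightarrow> d x y = 0) \<and>
     (\<forall>x\<in>X. \<forall>y\<in>X. d x y \<ge> 0) \<and>
     (\<forall>x\<in>X. d x x = 0) \<and>
     (\<forall>x\<in>X. \<forall>y\<in>X. d x y = d y x) \<and>
     (\<forall>x\<in>X. \<forall>y\<in>X. \<forall>z\<in>X. d x z \<le> d x y + d y z)"

definition pseudo_metrics :: "'a set \<Rightarrow> ('a \<Rightarrow> 'a \<Rightarrow> real) set" where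
  "pseudo_metrics X = {d. pseudo_metric_on X d}"

definition lipschitz_structure :: "'a set \<Rightarrow> ('a \<Rightarrow> 'a \<Rightarrow> real) set \<Rightarrow> bool" where
  "lipschitz_structure X L \<longleftrightarrow>
     L \<noteq> {} \<and> L \<subseteq> pseudo_metrics X \<and>
     (\<forall>d d1. d \<in> pseudo_metrics X \<and> d1 \<in> L \<and> (\<forall>x\<in>X. \<forall>y\<in>X. d x y \<le> d1 x y) \<longrightarrow> d \<in> L) \<and>
     (\<forall>d\<in>L. \<forall>\<alpha>::real. \<alpha> > 0 \<longrightarrow> (\<lambda>x y. \<alpha> * d x y) \<in> L) \<and>
     (\<forall>d1\<in>L. \<forall>d2\<in>L. (\<lambda>x y. max (d1 x y) (d2 x y)) \<in> L)"

definition bounded_on_square :: "('a \<Rightarrow> 'a \<Rightarrow> real) \<Rightarrow> 'a set \<Rightarrow> bool" where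
  "bounded_on_square d A \<longleftrightarrow> (\<exists>M. \<forall>x\<in>A. \<forall>y\<in>A. d x y \<le> M)"

definition L1 :: "'a set \<Rightarrow> 'a set set \<Rightarrow> ('a \<Rightarrow> 'a \<Rightarrow> real) set" where
  "L1 X \<A> = {d \<in> pseudo_metrics X. \<exists>A\<in>\<A>. bounded_on_square d A}"

end

theory Submission
  imports Defs
begin

(* Boundedness on some member of the family survives domination and positive scaling;
   for the maximum of pseudo-metrics bounded on A and on B one passes to A \<inter> B,
   which is where closure under finite intersections enters. *)

lemma pseudo_metric_on_zero: "pseudo_metric_on X (\<lambda>x y. 0)"
  unfolding pseudo_metric_on_def by simp

lemma pseudo_metric_on_scale:
  assumes "pseudo_metric_on X d" and "a > 0"
  shows "pseudo_metric_on X (\<lambda>x y. a * d x y)"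
  using assms unfolding pseudo_metric_on_def
  by (simp add: distrib_left[symmetric] mult_left_mono)

lemma pseudo_metric_on_max:
  assumes d1: "pseudo_metric_on X d1" and d2: "pseudo_metric_on X d2"
  shows "pseudo_metric_on X (\<lambda>x y. max (d1 x y) (d2 x y))"
proof -
  have "max (d1 x z) (d2 x z) \<le> max (d1 x y) (d2 x y) + max (d1 y z) (d2 y z)"
    if "x \<in> X" "y \<in> X" "z \<in> X" for x y z
  proof -
    have "d1 x z \<le> d1 x y + d1 y z" "d2 x z \<le> d2 x y + d2 y z"
      using d1 d2 that unfolding pseudo_metric_on_def by blast+
    then show ?thesis by linarith
  qed
  then show ?thesis
    using d1 d2 unfolding pseudo_metric_on_def by (auto simp: le_max_iff_disj)
qed

lemma bounded_on_square_le:
  assumes "bounded_on_square d' A" and "\<forall>x\<in>A. \<forall>y\<in>A. d x y \<le> d' x y"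
  shows "bounded_on_square d A"
  using assms unfolding bounded_on_square_def by (meson order_trans)

lemma bounded_on_square_scale:
  assumes "bounded_on_square d A" and "a \<ge> 0"
  shows "bounded_on_square (\<lambda>x y. a * d x y) A"
  using assms unfolding bounded_on_square_def by (meson mult_left_mono)

lemma bounded_on_square_max:
  assumes "bounded_on_square d1 A" and "bounded_on_square d2 B"
  shows "bounded_on_square (\<lambda>x y. max (d1 x y) (d2 x y)) (A \<inter> B)"
  using assms unfolding bounded_on_square_def by (meson IntD1 IntD2 max.mono)

lemma L1I:
  assumes "pseudo_metric_on X d" and "A \<in> \<A>" and "bounded_on_square d A"
  shows "d \<in> L1 X \<A>"
  using assms unfolding L1_def pseudo_metrics_def by blast

lemma L1E:
  assumes "d \<in> L1 X \<A>"
  obtains A where "pseudo_metric_on X d" and "A \<in> \<A>" and "bounded_on_square d A"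
  using assms unfolding L1_def pseudo_metrics_def by blast

lemma L1_subset_pseudo_metrics: "L1 X \<A> \<subseteq> pseudo_metrics X"
  unfolding L1_def by blast

lemma zero_in_L1:
  assumes "\<A> \<noteq> {}"
  shows "(\<lambda>x y. 0) \<in> L1 X \<A>"
proof -
  obtain A where "A \<in> \<A>" using assms by blast
  moreover have "bounded_on_square (\<lambda>x y. 0) A"
    unfolding bounded_on_square_def by blast
  ultimately show ?thesis using pseudo_metric_on_zero by (rule L1I[rotated])
qed

lemma L1_downward_closed:
  assumes "\<forall>A\<in>\<A>. A \<subseteq> X"
    and "d \<in> pseudo_metrics X" and "d' \<in> L1 X \<A>"
    and "\<forall>x\<in>X. \<forall>y\<in>X. d x y \<le> d' x y"
  shows "d \<in> L1 X \<A>"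
proof -
  obtain A where A: "A \<in> \<A>" and "bounded_on_square d' A"
    using assms(3) by (rule L1E)
  moreover have "\<forall>x\<in>A. \<forall>y\<in>A. d x y \<le> d' x y"
    using A assms(1,4) by blast
  ultimately have "bounded_on_square d A" by (blast intro: bounded_on_square_le)
  with A assms(2) show ?thesis unfolding pseudo_metrics_def by (blast intro: L1I)
qed

lemma L1_scale:
  assumes "d \<in> L1 X \<A>" and "a > 0"
  shows "(\<lambda>x y. a * d x y) \<in> L1 X \<A>"
  using assms(1)
proof (rule L1E)
  fix A assume "pseudo_metric_on X d" "A \<in> \<A>" "bounded_on_square d A"
  with assms(2) show ?thesis
    by (blast intro: L1I pseudo_metric_on_scale bounded_on_square_scale less_imp_le)
qed

lemma L1_max:
  assumes "\<forall>A\<in>\<A>. \<forall>B\<in>\<A>. A \<inter> B \<in> \<A>"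
    and "d1 \<in> L1 X \<A>" and "d2 \<in> L1 X \<A>"
  shows "(\<lambda>x y. max (d1 x y) (d2 x y)) \<in> L1 X \<A>"
proof -
  obtain A where "pseudo_metric_on X d1" "A \<in> \<A>" "bounded_on_square d1 A"
    using assms(2) by (rule L1E)
  moreover obtain B where "pseudo_metric_on X d2" "B \<in> \<A>" "bounded_on_square d2 B"
    using assms(3) by (rule L1E)
  ultimately show ?thesis
    using assms(1) by (blast intro: L1I pseudo_metric_on_max bounded_on_square_max)
qed

theorem theorem3p1:
  fixes X :: "'a set" and \<A> :: "'a set set"
  assumes "\<A> \<noteq> {}"
    and "\<forall>A\<in>\<A>. A \<subseteq> X"
    and "\<forall>A\<in>\<A>. \<forall>B\<in>\<A>. A \<inter> B \<in> \<A>"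
  shows "lipschitz_structure X (L1 X \<A>)"
  unfolding lipschitz_structure_def
proof (intro conjI ballI allI impI)
  show "L1 X \<A> \<noteq> {}" using zero_in_L1[OF assms(1)] by blast
  show "L1 X \<A> \<subseteq> pseudo_metrics X" by (rule L1_subset_pseudo_metrics)
  show "d \<in> L1 X \<A>"
    if "d \<in> pseudo_metrics X \<and> d1 \<in> L1 X \<A> \<and> (\<forall>x\<in>X. \<forall>y\<in>X. d x y \<le> d1 x y)" for d d1
    using assms(2) that by (blast intro: L1_downward_closed)
  show "(\<lambda>x y. \<alpha> * d x y) \<in> L1 X \<A>" if "d \<in> L1 X \<A>" "\<alpha> > 0" for d and \<alpha> :: real
    using that by (rule L1_scale)
  show "(\<lambda>x y. max (d1 x y) (d2 x y)) \<in> L1 X \<A>" if "d1 \<in> L1 X \<A>" "d2 \<in> L1 X \<A>" for d1 d2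
    using assms(3) that by (rule L1_max)
qed

end
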